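(* In the setting below, any correct sink member and any correct non-sink member are intertwined: for every correct $i\in V_{\mathit{sink}}$, every correct $i'\in\Pi\setminus V_{\mathit{sink}}$, every quorum $Q$ of $i$ and every quorum $Q'$ of $i'$, we have $|Q\cap Q'|>f$.
   Context: Processes and faults: $\Pi$ is a finite set of processes, $f\ge0$ a known integer; $W\subseteq\Pi$ is the set of correct processes and $F=\Pi\setminus W$ the Byzantine faulty processes, $|F|\le f$. Faulty processes may declare arbitrary slices. Slices and quorums: each process $i$ has a set $\mathcal{S}_i$ of slices (subsets of $\Pi$). $Q\subseteq\Pi$ is a quorum if every $i\in Q$ has some $S\in\mathcal{S}_i$ with $S\subseteq Q$; a quorum of $i$ is a quorum containing $i$. Two correct processes $i,j$ are intertwined if $|Q\cap Q'|>f$ for every quorum $Q$ of $i$ and every quorum $Q'$ of $j$. Knowledge graph: each process $i$ is given $\mathit{PD}_i\subseteq\Pi$; $G_{\mathit{di}}$ is the directed graph on $\Pi$ with edge $(i,j)$ iff $j\in\mathit{PD}_i$. A sink component is a strongly connected component of $G_{\mathit{di}}$ from which no path leads outside it. A directed graph is $k$-OSR if (1) its underlying undirected graph is connected; (2) its condensation into strongly connected components has exactly one sink $G_{\mathit{sink}}$; (3) $G_{\mathit{sink}}$ is $k$-strongly connected (every ordered pair of its nodes joined by $k$ node-disjoint directed paths); (4) from every node outside $G_{\mathit{sink}}$ to every node in it there are at least $k$ node-disjoint directed paths. Standing assumption: $G_{\mathit{di}}$ has a unique sink component with vertex set $V_{\mathit{sink}}$, which contains at least $2f+1$ correct processes,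 and the graph obtained from $G_{\mathit{di}}$ by deleting $F$ is $(f+1)$-OSR. Slice construction: let $m=\lceil (|V_{\mathit{sink}}|+f+1)/2\rceil$. Every correct $i\in V_{\mathit{sink}}$ has $\mathcal{S}_i=\{S\subseteq V_{\mathit{sink}}: |S|=m\}$. Every correct $i\notin V_{\mathit{sink}}$ is given a set $V_i\subseteq V_{\mathit{sink}}$ containing at least $f+1$ correct members of $V_{\mathit{sink}}$, and has $\mathcal{S}_i=\{S\subseteq V_i: |S|=f+1\}$. *)

theory Defs
  imports Complex_Main
begin

definition is_quorum :: "'p set \<Rightarrow> ('p \<Rightarrow> 'p set set) \<Rightarrow> 'p set \<Rightarrow> bool" where
  "is_quorum Procs S Q \<longleftrightarrow> Q \<subseteq> Procs \<and> (\<forall>i\<in>Q. \<exists>T\<in>S i. T \<subseteq> Q)"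

definition quorum_of :: "'p set \<Rightarrow> ('p \<Rightarrow> 'p set set) \<Rightarrow> 'p set \<Rightarrow> 'p \<Rightarrow> bool" where
  "quorum_of Procs S Q i \<longleftrightarrow> is_quorum Procs S Q \<and> i \<in> Q"

definition intertwined :: "'p set \<Rightarrow> ('p \<Rightarrow> 'p set set) \<Rightarrow> nat \<Rightarrow> 'p \<Rightarrow> 'p \<Rightarrow> bool" where
  "intertwined Procs S f i j \<longleftrightarrow>
     (\<forall>Q Q'. quorum_of Procs S Q i \<longrightarrow> quorum_of Procs S Q' j \<longrightarrow> card (Q \<inter> Q') > f)"

definition kgraph_edges :: "'p set \<Rightarrow> ('p \<Rightarrow> 'p set) \<Rightarrow> ('p \<times> 'p) set" where
  "kgraph_edges Procs PD = {(i, j). i \<in> Procs \<and> j \<in> Procs \<and> j \<in> PD i}"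

definition restrict_edges :: "('p \<times> 'p) set \<Rightarrow> 'p set \<Rightarrow> ('p \<times> 'p) set" where
  "restrict_edges E U = E \<inter> (U \<times> U)"

definition is_scc :: "'p set \<Rightarrow> ('p \<times> 'p) set \<Rightarrow> 'p set \<Rightarrow> bool" where
  "is_scc V E C \<longleftrightarrow> (\<exists>v\<in>V. C = {u\<in>V. (v, u) \<in> (restrict_edges E V)\<^sup>* \<and> (u, v) \<in> (restrict_edges E V)\<^sup>*})"

definition is_sink_component :: "'p set \<Rightarrow> ('p \<times> 'p) set \<Rightarrow> 'p set \<Rightarrow> bool" where
  "is_sink_component V E C \<longleftrightarrow> is_scc V E C \<and>
     (\<forall>u\<in>C. \<forall>w. (u, w) \<in> (restrict_edges E V)\<^sup>* \<longrightarrow> w \<in> C)"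

definition is_path :: "'p set \<Rightarrow> ('p \<times> 'p) set \<Rightarrow> 'p list \<Rightarrow> 'p \<Rightarrow> 'p \<Rightarrow> bool" where
  "is_path V E p u v \<longleftrightarrow> p \<noteq> [] \<and> hd p = u \<and> last p = v \<and> set p \<subseteq> V \<and> distinct p \<and>
     (\<forall>n. Suc n < length p \<longrightarrow> (p ! n, p ! Suc n) \<in> E)"

definition k_disjoint_paths :: "'p set \<Rightarrow> ('p \<times> 'p) set \<Rightarrow> nat \<Rightarrow> 'p \<Rightarrow> 'p \<Rightarrow> bool" where
  "k_disjoint_paths V E k u v \<longleftrightarrow>
     (\<exists>P. finite P \<and> card P = k \<and> (\<forall>p\<in>P. is_path V E p u v) \<and>
          (\<forall>p\<in>P. \<forall>q\<in>P. p \<noteq> q \<longrightarrow> set p \<inter> set q \<subseteq> {u, v}))"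

definition k_strongly_connected :: "'p set \<Rightarrow> ('p \<times> 'p) set \<Rightarrow> nat \<Rightarrow> bool" where
  "k_strongly_connected V E k \<longleftrightarrow>
     (\<forall>u\<in>V. \<forall>v\<in>V. u \<noteq> v \<longrightarrow> k_disjoint_paths V (restrict_edges E V) k u v)"

definition k_OSR :: "'p set \<Rightarrow> ('p \<times> 'p) set \<Rightarrow> nat \<Rightarrow> bool" where
  "k_OSR V E k \<longleftrightarrow>
     (\<forall>u\<in>V. \<forall>v\<in>V. (u, v) \<in> (restrict_edges E V \<union> (restrict_edges E V)\<inverse>)\<^sup>*) \<and>
     (\<exists>!C. is_sink_component V E C) \<and>
     (\<forall>C. is_sink_component V E C \<longrightarrow>
        k_strongly_connected C (restrict_edges E V) k \<and>
        (\<forall>u\<in>V - C. \<forall>v\<in>C. k_disjoint_paths V (restrict_edges E V) k u v))"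

end

theory Submission
  imports Defs
begin

text \<open>A quorum of a correct non-sink process contains one of its slices: f + 1 members of
  Vi \<subseteq> Vsink, so at least one correct sink member j. The quorum then also contains a slice of j,
  an m-subset of Vsink. A quorum of a correct sink process contains an m-subset of Vsink as well,
  and two m-subsets of Vsink share more than f members since 2m \<ge> |Vsink| + f + 1.\<close>

lemma le_double_nat_ceiling_half: "n \<le> 2 * nat \<lceil>real n / 2\<rceil>"
proof -
  have "real n / 2 \<le> of_int \<lceil>real n / 2\<rceil>" by (rule le_of_int_ceiling)
  then show ?thesis by linarith
qed

lemma card_Int_gt_if_card_sum_gt:
  assumes "finite V" "A \<subseteq> V" "B \<subseteq> V" "card V + k < card A + card B"
  shows "k < card (A \<inter> B)"
proof -
  have "finite A" "finite B" using assms(1-3) finite_subset by blast+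
  then have "card A + card B = card (A \<union> B) + card (A \<inter> B)" by (rule card_Un_Int)
  moreover have "card (A \<union> B) \<le> card V" using assms(1-3) by (intro card_mono) auto
  ultimately show ?thesis using assms(4) by linarith
qed

lemma ex_not_mem_if_card_less:
  assumes "finite F" "card F < card T"
  shows "\<exists>j\<in>T. j \<notin> F"
  using assms card_mono leD by blast

lemma is_quorum_slice_subset:
  assumes "is_quorum Procs S Q" "j \<in> Q"
  obtains T where "T \<in> S j" "T \<subseteq> Q"
  using assms unfolding is_quorum_def by blast

lemma finite_quorum: "finite Procs \<Longrightarrow> is_quorum Procs S Q \<Longrightarrow> finite Q"
  unfolding is_quorum_def using finite_subset by blast

theorem lemma4:
  fixes Procs W F :: "'p set" and f :: nat
    and PD :: "'p \<Rightarrow> 'p set" and S :: "'p \<Rightarrow> 'p set set"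
    and Vsink :: "'p set" and Vi :: "'p \<Rightarrow> 'p set" and m :: nat
  assumes finProcs: "finite Procs"
    and W: "W \<subseteq> Procs" and F: "F = Procs - W" and cardF: "card F \<le> f"
    and PD: "\<forall>i\<in>Procs. PD i \<subseteq> Procs"
    and sink: "is_sink_component Procs (kgraph_edges Procs PD) Vsink"
    and sink_unique: "\<forall>C. is_sink_component Procs (kgraph_edges Procs PD) C \<longrightarrow> C = Vsink"
    and sink_correct: "card (Vsink \<inter> W) \<ge> 2 * f + 1"
    and osr: "k_OSR (Procs - F) (restrict_edges (kgraph_edges Procs PD) (Procs - F)) (f + 1)"
    and m_def: "m = nat \<lceil>real (card Vsink + f + 1) / 2\<rceil>"
    and slices_sink: "\<forall>i\<in>W \<inter> Vsink. S i = {T. T \<subseteq> Vsink \<and> card T = m}"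
    and Vi: "\<forall>i\<in>W - Vsink. Vi i \<subseteq> Vsink \<and> card (Vi i \<inter> W) \<ge> f + 1"
    and slices_nonsink: "\<forall>i\<in>W - Vsink. S i = {T. T \<subseteq> Vi i \<and> card T = f + 1}"
  shows "\<forall>i\<in>W \<inter> Vsink. \<forall>i'\<in>W - Vsink. intertwined Procs S f i i'"
  unfolding intertwined_def quorum_of_def
proof (intro ballI allI impI, elim conjE)
  fix i i' Q Q'
  assume i: "i \<in> W \<inter> Vsink" and i': "i' \<in> W - Vsink"
    and Q: "is_quorum Procs S Q" "i \<in> Q" and Q': "is_quorum Procs S Q'" "i' \<in> Q'"
  have Vsink_Procs: "Vsink \<subseteq> Procs" using sink unfolding is_sink_component_def is_scc_def by blast
  then have "finite Vsink" using finProcs finite_subset by blast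
  obtain T where "T \<in> S i" "T \<subseteq> Q" using Q by (rule is_quorum_slice_subset)
  with slices_sink i have T: "T \<subseteq> Vsink" "card T = m" "T \<subseteq> Q" by auto
  obtain T' where "T' \<in> S i'" "T' \<subseteq> Q'" using Q' by (rule is_quorum_slice_subset)
  with slices_nonsink i' have T': "T' \<subseteq> Vi i'" "card T' = f + 1" "T' \<subseteq> Q'" by auto
  have "finite F" "card F < card T'" using F finProcs cardF T'(2) by auto
  then obtain j where "j \<in> T'" "j \<notin> F" using ex_not_mem_if_card_less by blast
  with T' Vi i' F Vsink_Procs have j: "j \<in> W \<inter> Vsink" "j \<in> Q'" by blast+
  obtain U where "U \<in> S j" "U \<subseteq> Q'" using Q'(1) j(2) by (rule is_quorum_slice_subset)
  with slices_sink j(1) have U: "U \<subseteq> Vsink" "card U = m" "U \<subseteq> Q'" by auto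
  have "card Vsink + f < card T + card U"
    using le_double_nat_ceiling_half[of "card Vsink + f + 1"] m_def T(2) U(2) by linarith
  then have "f < card (T \<inter> U)" by (rule card_Int_gt_if_card_sum_gt[OF \<open>finite Vsink\<close> T(1) U(1)])
  also have "card (T \<inter> U) \<le> card (Q \<inter> Q')"
    using T(3) U(3) finite_quorum[OF finProcs Q(1)] by (intro card_mono) auto
  finally show "f < card (Q \<inter> Q')" .
qed

end
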